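(* Let $t \geq 1$ be an integer and let $\mathcal{F}$ be a non-empty finite $t$-symmetric family of finite sets. Then \[\beta(\mathcal{F},t) = \frac{l(\mathcal{F},t)}{|\mathcal{F}|}.\]
   Context: A family $\mathcal{F}$ is $t$-symmetric if there is a group $\Gamma$ of bijections $\mathcal{F} \to \mathcal{F}$ such that for any $A, B \in \mathcal{F}$: (a) there exists $\delta \in \Gamma$ with $B = \delta(A)$; (b) if $|A \cap B| \geq t$ then $|\gamma(A) \cap \gamma(B)| \geq t$ for all $\gamma \in \Gamma$. A family $\mathcal{A}$ is $t$-intersecting if $|A \cap B| \geq t$ for all $A, B \in \mathcal{A}$ with $A \neq B$; $l(\mathcal{F},t)$ is the size of a largest $t$-intersecting sub-family of $\mathcal{F}$. For a family $\mathcal{A}$, $\mathcal{A}^{t,+} = \{A \in \mathcal{A} : |A \cap B| \geq t \text{ for all } B \in \mathcal{A}\setminus\{A\}\}$ and $\mathcal{A}^{t,-} = \mathcal{A} \setminus \mathcal{A}^{t,+}$. For $\mathcal{A} \subseteq \mathcal{F}$, $\beta(\mathcal{F},t,\mathcal{A}) = \frac{l(\mathcal{F},t) - |\mathcal{A}^{t,+}|}{|\mathcal{A}^{t,-}|}$ if $\mathcal{A}^{t,-} \neq \emptyset$, and $\frac{l(\mathcal{F},t)}{|\mathcal{F}|}$ otherwise; $\beta(\mathcal{F},t) = \min_{\mathcal{A} \subseteq \mathcal{F}} \beta(\mathcal{F},t,\mathcal{A})$. *)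

theory Defs
  imports Complex_Main
begin

definition bij_group :: "'a set set \<Rightarrow> ('a set \<Rightarrow> 'a set) set \<Rightarrow> bool" where
  "bij_group F \<Gamma> \<longleftrightarrow>
     (\<forall>g\<in>\<Gamma>. bij_betw g F F) \<and>
     (\<exists>e\<in>\<Gamma>. \<forall>A\<in>F. e A = A) \<and>
     (\<forall>g\<in>\<Gamma>. \<forall>h\<in>\<Gamma>. \<exists>k\<in>\<Gamma>. \<forall>A\<in>F. k A = g (h A)) \<and>
     (\<forall>g\<in>\<Gamma>. \<exists>k\<in>\<Gamma>. \<forall>A\<in>F. k (g A) = A)"

definition t_symmetric :: "'a set set \<Rightarrow> nat \<Rightarrow> bool" where
  "t_symmetric F t \<longleftrightarrow> (\<exists>\<Gamma>. bij_group F \<Gamma> \<and>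
     (\<forall>A\<in>F. \<forall>B\<in>F. (\<exists>\<delta>\<in>\<Gamma>. B = \<delta> A)) \<and>
     (\<forall>A\<in>F. \<forall>B\<in>F. t \<le> card (A \<inter> B) \<longrightarrow>
        (\<forall>\<gamma>\<in>\<Gamma>. t \<le> card (\<gamma> A \<inter> \<gamma> B))))"

definition t_intersecting :: "nat \<Rightarrow> 'a set set \<Rightarrow> bool" where
  "t_intersecting t \<A> \<longleftrightarrow> (\<forall>A\<in>\<A>. \<forall>B\<in>\<A>. A \<noteq> B \<longrightarrow> t \<le> card (A \<inter> B))"

definition l_max :: "'a set set \<Rightarrow> nat \<Rightarrow> nat" where
  "l_max F t = Max {card \<A> | \<A>. \<A> \<subseteq> F \<and> t_intersecting t \<A>}"

definition plus_part :: "'a set set \<Rightarrow> nat \<Rightarrow> 'a set set" where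
  "plus_part \<A> t = {A \<in> \<A>. \<forall>B \<in> \<A> - {A}. t \<le> card (A \<inter> B)}"

definition minus_part :: "'a set set \<Rightarrow> nat \<Rightarrow> 'a set set" where
  "minus_part \<A> t = \<A> - plus_part \<A> t"

definition beta_fam :: "'a set set \<Rightarrow> nat \<Rightarrow> 'a set set \<Rightarrow> real" where
  "beta_fam F t \<A> =
     (if minus_part \<A> t \<noteq> {}
      then (real (l_max F t) - real (card (plus_part \<A> t))) / real (card (minus_part \<A> t))
      else real (l_max F t) / real (card F))"

definition beta :: "'a set set \<Rightarrow> nat \<Rightarrow> real" where
  "beta F t = Min (beta_fam F t ` Pow F)"

end

theory Submission
  imports Defs "HOL-Library.FuncSet"
begin

text \<open>
  Let \<open>I\<close> be a largest \<open>t\<close>-intersecting subfamily of \<open>F\<close>, \<open>l = |I|\<close>, and split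
  \<open>\<A> \<subseteq> F\<close> into \<open>P = \<A>\<^sup>t\<^sup>,\<^sup>+\<close> and \<open>M = \<A>\<^sup>t\<^sup>,\<^sup>-\<close>. The symmetry group acts transitively on
  \<open>F\<close>, so every member of \<open>F\<close> lies in \<open>\<gamma>(I)\<close> for the same number of group elements \<open>\<gamma>\<close>;
  averaging \<open>|\<gamma>(I) \<inter> M|\<close> over the group gives some \<open>\<gamma>\<close> with \<open>|\<gamma>(I) \<inter> M| \<ge> l |M| / |F|\<close>.
  As \<open>\<gamma>(I)\<close> is again \<open>t\<close>-intersecting and every member of \<open>P\<close> \<open>t\<close>-intersects all of
  \<open>\<A>\<close>, the family \<open>P \<union> (\<gamma>(I) \<inter> M)\<close> is \<open>t\<close>-intersecting, so \<open>|P| + l |M| / |F| \<le> l\<close>,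
  i.e. \<open>\<beta>(F,t,\<A>) \<ge> l / |F|\<close>; the empty family attains this bound.
\<close>

lemma finite_t_intersecting_cards:
  assumes "finite F"
  shows "finite {card \<A> | \<A>. \<A> \<subseteq> F \<and> t_intersecting t \<A>}"
  by (rule finite_subset[of _ "card ` Pow F"]) (use assms in auto)

lemma card_le_l_max:
  assumes "finite F" "\<A> \<subseteq> F" "t_intersecting t \<A>"
  shows "card \<A> \<le> l_max F t"
  unfolding l_max_def
  by (rule Max_ge[OF finite_t_intersecting_cards[OF assms(1)]]) (use assms in auto)

lemma l_max_attained:
  assumes "finite F"
  obtains I where "I \<subseteq> F" "t_intersecting t I" "card I = l_max F t"
proof -
  have "{card \<A> | \<A>. \<A> \<subseteq> F \<and> t_intersecting t \<A>} \<noteq> {}"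
    by (auto simp: t_intersecting_def)
  from Max_in[OF finite_t_intersecting_cards[OF assms] this] that show ?thesis
    unfolding l_max_def by auto
qed

lemma t_intersecting_image:
  assumes "I \<subseteq> F" "t_intersecting t I"
    and "\<forall>X\<in>F. \<forall>Y\<in>F. t \<le> card (X \<inter> Y) \<longrightarrow> t \<le> card (g X \<inter> g Y)"
  shows "t_intersecting t (g ` I)"
  using assms unfolding t_intersecting_def by (metis image_iff subsetD)

lemma t_intersecting_plus_part_Un:
  assumes "J \<subseteq> \<A>" "t_intersecting t J"
  shows "t_intersecting t (plus_part \<A> t \<union> J)"
  unfolding t_intersecting_def
proof (intro ballI impI)
  fix X Y assume X: "X \<in> plus_part \<A> t \<union> J" and Y: "Y \<in> plus_part \<A> t \<union> J" and "X \<noteq> Y"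
  have "X \<in> \<A>" "Y \<in> \<A>" using X Y assms(1) unfolding plus_part_def by auto
  consider "X \<in> plus_part \<A> t" | "Y \<in> plus_part \<A> t" | "X \<in> J" "Y \<in> J"
    using X Y by blast
  then show "t \<le> card (X \<inter> Y)"
  proof cases
    case 1
    with \<open>Y \<in> \<A>\<close> \<open>X \<noteq> Y\<close> show ?thesis unfolding plus_part_def by auto
  next
    case 2
    with \<open>X \<in> \<A>\<close> \<open>X \<noteq> Y\<close> show ?thesis unfolding plus_part_def by (auto simp: Int_commute)
  next
    case 3
    with assms(2) \<open>X \<noteq> Y\<close> show ?thesis unfolding t_intersecting_def by blast
  qed
qed

text \<open>Permutations of \<open>F\<close> are represented by maps that are extensional outside \<open>F\<close>.\<close>

locale transitive_perm_group =
  fixes F :: "'a set" and G :: "('a \<Rightarrow> 'a) set"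
  assumes finite_F: "finite F"
    and maps: "G \<subseteq> F \<rightarrow>\<^sub>E F"
    and inj: "g \<in> G \<Longrightarrow> inj_on g F"
    and comp_closed: "g \<in> G \<Longrightarrow> h \<in> G \<Longrightarrow> restrict (g \<circ> h) F \<in> G"
    and transitive: "a \<in> F \<Longrightarrow> b \<in> F \<Longrightarrow> \<exists>g\<in>G. g a = b"
begin

lemma finite_G: "finite G"
  using finite_subset[OF maps] finite_PiE[OF finite_F finite_F] by blast

lemma map_into: "g \<in> G \<Longrightarrow> a \<in> F \<Longrightarrow> g a \<in> F"
  using maps by auto

lemma card_fiber_le:
  assumes "a \<in> F" "b \<in> F" "b' \<in> F"
  shows "card {g\<in>G. g a = b} \<le> card {g\<in>G. g a = b'}"
proof -
  obtain \<delta> where \<delta>: "\<delta> \<in> G" "\<delta> b = b'"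
    using transitive[OF assms(2,3)] by blast
  \<comment> \<open>left translation by \<open>\<delta>\<close> maps the fibre over \<open>b\<close> injectively into that over \<open>b'\<close>\<close>
  let ?shift = "\<lambda>g. restrict (\<delta> \<circ> g) F"
  have "inj_on ?shift {g\<in>G. g a = b}"
  proof (rule inj_onI)
    fix g g' assume g: "g \<in> {g\<in>G. g a = b}" and g': "g' \<in> {g\<in>G. g a = b}"
      and eq: "?shift g = ?shift g'"
    show "g = g'"
    proof (rule PiE_ext)
      show "g \<in> F \<rightarrow>\<^sub>E F" "g' \<in> F \<rightarrow>\<^sub>E F" using g g' maps by auto
      fix x assume "x \<in> F"
      with fun_cong[OF eq, of x] have "\<delta> (g x) = \<delta> (g' x)" by simp
      moreover have "g x \<in> F" "g' x \<in> F" using g g' \<open>x \<in> F\<close> map_into by auto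
      ultimately show "g x = g' x" using inj_onD[OF inj[OF \<delta>(1)]] by blast
    qed
  qed
  moreover have "?shift ` {g\<in>G. g a = b} \<subseteq> {g\<in>G. g a = b'}"
    using comp_closed[OF \<delta>(1)] \<delta>(2) assms(1) by auto
  ultimately show ?thesis
    by (rule card_inj_on_le) (use finite_G in auto)
qed

lemma card_fiber:
  assumes "a \<in> F" "b \<in> F"
  shows "card F * card {g\<in>G. g a = b} = card G"
proof -
  have "(\<lambda>g. g a) ` G \<subseteq> F" using map_into assms(1) by auto
  from sum.group[OF finite_G finite_F this, of "\<lambda>_. 1::nat"]
  have "card G = (\<Sum>b'\<in>F. card {g\<in>G. g a = b'})" by simp
  also have "\<dots> = (\<Sum>b'\<in>F. card {g\<in>G. g a = b})"
    using assms by (intro sum.cong refl antisym card_fiber_le) auto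
  finally show ?thesis by simp
qed

lemma sum_card_image_Int:
  assumes "I \<subseteq> F" "M \<subseteq> F"
  shows "card F * (\<Sum>g\<in>G. card (g ` I \<inter> M)) = card I * card M * card G"
proof -
  have fin: "finite I" "finite M" using assms finite_F finite_subset by auto
  have "card (g ` I \<inter> M) = (\<Sum>a\<in>I. of_bool (g a \<in> M))" if "g \<in> G" for g
  proof -
    have "g ` I \<inter> M = g ` (I \<inter> {a. g a \<in> M})" by auto
    moreover have "inj_on g (I \<inter> {a. g a \<in> M})"
      by (rule inj_on_subset[OF inj[OF that]]) (use assms(1) in auto)
    ultimately show ?thesis using fin by (simp add: card_image)
  qed
  then have "(\<Sum>g\<in>G. card (g ` I \<inter> M)) = (\<Sum>g\<in>G. \<Sum>a\<in>I. of_bool (g a \<in> M))"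
    by (rule sum.cong[OF refl])
  also have "\<dots> = (\<Sum>a\<in>I. \<Sum>g\<in>G. of_bool (g a \<in> M))"
    by (rule sum.swap)
  also have "\<dots> = (\<Sum>a\<in>I. card {g\<in>G. g a \<in> M})"
    using finite_G by (simp add: Int_def)
  also have "\<dots> = (\<Sum>a\<in>I. \<Sum>b\<in>M. card {g\<in>G. g a = b})"
  proof (rule sum.cong[OF refl])
    fix a
    have "(\<lambda>g. g a) ` {g\<in>G. g a \<in> M} \<subseteq> M" by auto
    from sum.group[OF _ fin(2) this, of "\<lambda>_. 1::nat"] finite_G
    have "card {g\<in>G. g a \<in> M} = (\<Sum>b\<in>M. card {g\<in>G. g a \<in> M \<and> g a = b})"
      by simp
    also have "\<dots> = (\<Sum>b\<in>M. card {g\<in>G. g a = b})"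
      by (intro sum.cong refl arg_cong[where f = card]) auto
    finally show "card {g\<in>G. g a \<in> M} = (\<Sum>b\<in>M. card {g\<in>G. g a = b})" .
  qed
  finally have "card F * (\<Sum>g\<in>G. card (g ` I \<inter> M))
      = (\<Sum>a\<in>I. \<Sum>b\<in>M. card F * card {g\<in>G. g a = b})"
    by (simp add: sum_distrib_left)
  also have "\<dots> = (\<Sum>a\<in>I. \<Sum>b\<in>M. card G)"
    using card_fiber assms by (intro sum.cong) auto
  finally show ?thesis by simp
qed

lemma exists_large_image_Int:
  assumes "I \<subseteq> F" "M \<subseteq> F" "F \<noteq> {}"
  obtains g where "g \<in> G" "card I * card M \<le> card F * card (g ` I \<inter> M)"
proof -
  have "\<exists>g\<in>G. card I * card M \<le> card F * card (g ` I \<inter> M)"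
  proof (rule ccontr)
    assume "\<not> ?thesis"
    then have less: "card F * card (g ` I \<inter> M) < card I * card M" if "g \<in> G" for g
      using that by auto
    have "G \<noteq> {}" using transitive assms(3) by blast
    then have "(\<Sum>g\<in>G. card F * card (g ` I \<inter> M)) < (\<Sum>g\<in>G. card I * card M)"
      by (rule sum_strict_mono[OF finite_G _ less])
    then show False
      using sum_card_image_Int[OF assms(1,2)] by (simp add: sum_distrib_left mult.commute)
  qed
  with that show ?thesis by blast
qed

end

lemma t_symmetric_transitive_perm_group:
  assumes "finite F" "t_symmetric F t"
  obtains G where "transitive_perm_group F G"
    and "\<forall>g\<in>G. \<forall>X\<in>F. \<forall>Y\<in>F. t \<le> card (X \<inter> Y) \<longrightarrow> t \<le> card (g X \<inter> g Y)"
proof -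
  obtain \<Gamma> where group: "bij_group F \<Gamma>"
    and transitive: "\<forall>A\<in>F. \<forall>B\<in>F. \<exists>\<delta>\<in>\<Gamma>. B = \<delta> A"
    and preserving: "\<forall>A\<in>F. \<forall>B\<in>F. t \<le> card (A \<inter> B) \<longrightarrow> (\<forall>\<gamma>\<in>\<Gamma>. t \<le> card (\<gamma> A \<inter> \<gamma> B))"
    using assms(2) unfolding t_symmetric_def by blast
  have bij: "\<And>\<gamma>. \<gamma> \<in> \<Gamma> \<Longrightarrow> bij_betw \<gamma> F F"
    and comp: "\<And>\<gamma> \<eta>. \<gamma> \<in> \<Gamma> \<Longrightarrow> \<eta> \<in> \<Gamma> \<Longrightarrow> \<exists>\<kappa>\<in>\<Gamma>. \<forall>A\<in>F. \<kappa> A = \<gamma> (\<eta> A)"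
    using group unfolding bij_group_def by auto
  let ?G = "(\<lambda>\<gamma>. restrict \<gamma> F) ` \<Gamma>"
  have "transitive_perm_group F ?G"
  proof
    show "?G \<subseteq> F \<rightarrow>\<^sub>E F"
    proof
      fix g assume "g \<in> ?G"
      then obtain \<gamma> where "\<gamma> \<in> \<Gamma>" "g = restrict \<gamma> F" by blast
      then show "g \<in> F \<rightarrow>\<^sub>E F" using bij_betw_apply[OF bij[OF \<open>\<gamma> \<in> \<Gamma>\<close>]] by auto
    qed
    show "inj_on g F" if "g \<in> ?G" for g
      using that bij by (auto simp: bij_betw_def)
    show "restrict (g \<circ> h) F \<in> ?G" if g: "g \<in> ?G" and h: "h \<in> ?G" for g h
    proof -
      obtain \<gamma> \<eta> where "\<gamma> \<in> \<Gamma>" "\<eta> \<in> \<Gamma>" "g = restrict \<gamma> F" "h = restrict \<eta> F"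
        using g h by blast
      moreover obtain \<kappa> where "\<kappa> \<in> \<Gamma>" "\<forall>A\<in>F. \<kappa> A = \<gamma> (\<eta> A)"
        using comp[OF \<open>\<gamma> \<in> \<Gamma>\<close> \<open>\<eta> \<in> \<Gamma>\<close>] by blast
      ultimately have "restrict (g \<circ> h) F = restrict \<kappa> F"
        using bij_betw_apply[OF bij[OF \<open>\<eta> \<in> \<Gamma>\<close>]] by (auto simp: fun_eq_iff)
      with \<open>\<kappa> \<in> \<Gamma>\<close> show ?thesis by blast
    qed
    show "\<exists>g\<in>?G. g a = b" if "a \<in> F" "b \<in> F" for a b
    proof -
      obtain \<delta> where "\<delta> \<in> \<Gamma>" "b = \<delta> a" using transitive \<open>a \<in> F\<close> \<open>b \<in> F\<close> by blast
      then have "restrict \<delta> F \<in> ?G" "restrict \<delta> F a = b" using \<open>a \<in> F\<close> by simp_all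
      then show ?thesis by blast
    qed
  qed (fact assms(1))
  moreover have "\<forall>g\<in>?G. \<forall>X\<in>F. \<forall>Y\<in>F. t \<le> card (X \<inter> Y) \<longrightarrow> t \<le> card (g X \<inter> g Y)"
  proof (intro ballI impI)
    fix g X Y assume "g \<in> ?G" "X \<in> F" "Y \<in> F" "t \<le> card (X \<inter> Y)"
    then obtain \<gamma> where "\<gamma> \<in> \<Gamma>" "g = restrict \<gamma> F" by blast
    moreover have "t \<le> card (\<gamma> X \<inter> \<gamma> Y)"
      using preserving \<open>X \<in> F\<close> \<open>Y \<in> F\<close> \<open>t \<le> card (X \<inter> Y)\<close> \<open>\<gamma> \<in> \<Gamma>\<close> by blast
    ultimately show "t \<le> card (g X \<inter> g Y)" using \<open>X \<in> F\<close> \<open>Y \<in> F\<close> by simp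
  qed
  ultimately show ?thesis by (rule that)
qed

lemma card_plus_part_minus_part_bound:
  assumes "transitive_perm_group F G" "F \<noteq> {}"
    and preserving: "\<forall>g\<in>G. \<forall>X\<in>F. \<forall>Y\<in>F. t \<le> card (X \<inter> Y) \<longrightarrow> t \<le> card (g X \<inter> g Y)"
    and "\<A> \<subseteq> F"
  shows "card (plus_part \<A> t) * card F + l_max F t * card (minus_part \<A> t) \<le> l_max F t * card F"
proof -
  interpret transitive_perm_group F G by fact
  obtain I where I: "I \<subseteq> F" "t_intersecting t I" "card I = l_max F t"
    using l_max_attained[OF finite_F] by blast
  let ?P = "plus_part \<A> t" and ?M = "minus_part \<A> t"
  have PM: "?P \<subseteq> \<A>" "?M \<subseteq> \<A>" "?P \<inter> ?M = {}"
    unfolding plus_part_def minus_part_def by auto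
  then have "?P \<subseteq> F" "?M \<subseteq> F" using assms(4) by auto
  then have fin: "finite ?P" "finite ?M" by (auto intro: finite_subset[OF _ finite_F])
  obtain g where g: "g \<in> G" "card I * card ?M \<le> card F * card (g ` I \<inter> ?M)"
    using exists_large_image_Int[OF I(1) \<open>?M \<subseteq> F\<close> assms(2)] by blast
  have "t_intersecting t (g ` I)"
    using t_intersecting_image[OF I(1,2)] preserving g(1) by blast
  then have "t_intersecting t (g ` I \<inter> ?M)" by (auto simp: t_intersecting_def)
  with PM(2) have "t_intersecting t (?P \<union> (g ` I \<inter> ?M))"
    by (intro t_intersecting_plus_part_Un) auto
  moreover have "?P \<union> (g ` I \<inter> ?M) \<subseteq> F" using \<open>?P \<subseteq> F\<close> \<open>?M \<subseteq> F\<close> by auto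
  ultimately have "card (?P \<union> (g ` I \<inter> ?M)) \<le> l_max F t"
    by (intro card_le_l_max[OF finite_F])
  then have "card ?P + card (g ` I \<inter> ?M) \<le> l_max F t"
    using PM(3) fin by (simp add: card_Un_disjoint disjoint_iff)
  then have "card ?P * card F + card (g ` I \<inter> ?M) * card F \<le> l_max F t * card F"
    by (metis add_mult_distrib mult_le_mono1)
  with g(2) I(3) show ?thesis by (simp add: mult.commute)
qed

lemma beta_eq_ratio_if_bound:
  assumes "finite F" "F \<noteq> {}"
    and bound: "\<And>\<A>. \<A> \<subseteq> F \<Longrightarrow>
      card (plus_part \<A> t) * card F + l_max F t * card (minus_part \<A> t) \<le> l_max F t * card F"
  shows "beta F t = real (l_max F t) / real (card F)"
proof -
  let ?r = "real (l_max F t) / real (card F)"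
  have n: "real (card F) > 0" using assms(1,2) by (simp add: card_gt_0_iff)
  have lower: "?r \<le> beta_fam F t \<A>" if "\<A> \<subseteq> F" for \<A>
  proof (cases "minus_part \<A> t = {}")
    case False
    have "finite (minus_part \<A> t)"
      using that assms(1) finite_subset unfolding minus_part_def by blast
    with False have m: "real (card (minus_part \<A> t)) > 0" by (simp add: card_gt_0_iff)
    have "real (card (plus_part \<A> t)) * card F + real (l_max F t) * card (minus_part \<A> t)
        \<le> real (l_max F t) * card F"
      using bound[OF that] by (metis of_nat_add of_nat_le_iff of_nat_mult)
    then have "real (l_max F t) * card (minus_part \<A> t)
        \<le> (real (l_max F t) - card (plus_part \<A> t)) * card F"
      by (simp add: left_diff_distrib)
    with n have "?r * card (minus_part \<A> t) \<le> real (l_max F t) - card (plus_part \<A> t)"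
      by (simp add: pos_divide_le_eq)
    with m False show ?thesis
      by (simp add: beta_fam_def pos_le_divide_eq)
  qed (simp add: beta_fam_def)
  have "beta_fam F t {} = ?r"
    by (simp add: beta_fam_def minus_part_def plus_part_def)
  then have attained: "?r \<in> beta_fam F t ` Pow F"
    by (metis Pow_bottom imageI)
  have fin: "finite (beta_fam F t ` Pow F)" using assms(1) by simp
  show ?thesis
    unfolding beta_def
  proof (rule antisym)
    show "Min (beta_fam F t ` Pow F) \<le> ?r" by (rule Min_le[OF fin attained])
    show "?r \<le> Min (beta_fam F t ` Pow F)"
      using fin attained lower by (intro Min.boundedI) auto
  qed
qed

theorem corollary3p9:
  fixes F :: "'a set set" and t :: nat
  assumes "t \<ge> 1" and "finite F" and "F \<noteq> {}" and "\<forall>A\<in>F. finite A"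
    and "t_symmetric F t"
  shows "beta F t = real (l_max F t) / real (card F)"
proof -
  obtain G where G: "transitive_perm_group F G"
    and preserving: "\<forall>g\<in>G. \<forall>X\<in>F. \<forall>Y\<in>F. t \<le> card (X \<inter> Y) \<longrightarrow> t \<le> card (g X \<inter> g Y)"
    using t_symmetric_transitive_perm_group[OF assms(2,5)] by blast
  show ?thesis
    by (rule beta_eq_ratio_if_bound[OF assms(2,3) card_plus_part_minus_part_bound[OF G assms(3) preserving]])
qed

end
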